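(* Let $\mathbf L\in\mathbb R^3$, $\mathbf L\neq0$, and $T>0$. If a state $(\mathbf r,\mathbf v)\in\Omega$ minimizes $g(\mathbf r)$ over all states $(\mathbf r,\mathbf v)\in\Omega$ satisfying $\mathbf L(\mathbf r,\mathbf v)=\mathbf L$ and $T(\mathbf v)=T$, then all vectors $\mathbf r_i,\mathbf v_i$, $i=1,\dots,N$, lie in the plane through the origin orthogonal to $\mathbf L$; consequently the solution of the equations of motion starting from $(\mathbf r,\mathbf v)$ is a flat (planar) trajectory. That is, the minimum in this problem can be achieved only at states belonging to flat trajectories.
   Context: Fix $N\ge2$, masses $m_i>0$, $\gamma>0$. Three-dimensional configuration space $\mathfrak R_3=\{\mathbf r=(\mathbf r_1,\dots,\mathbf r_N)\in(\mathbb R^3)^N:\ \mathbf r_i\ne\mathbf r_j \text{ for } i\neq j\}$; phase space $\Omega=\mathfrak R_3\times(\mathbb R^3)^N$ with states $(\mathbf r,\mathbf v)$, $\mathbf v=(\mathbf v_1,\dots,\mathbf v_N)$. Angular momentum $\mathbf L(\mathbf r,\mathbf v)=\sum_i m_i\,\mathbf r_i\times\mathbf v_i$; kinetic energy $T(\mathbf v)=\frac12\sum_im_i|\mathbf v_i|^2$; $g(\mathbf r)=\sum_im_i|\mathbf r_i|^2$. Equations of motion: $m_i\ddot{\mathbf r}_i=\sum_{j\ne i}\gamma m_im_j(\mathbf r_j-\mathbf r_i)/|\mathbf r_j-\mathbf r_i|^3$. *)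

theory Defs
  imports "HOL-Analysis.Analysis"
begin

text \<open>Bodies are indexed by a finite type 'n (N = CARD('n)); positions and velocities
  are vectors in real^3.\<close>

definition config_space :: "('n \<Rightarrow> real^3) set" where
  "config_space = {r. \<forall>i j. i \<noteq> j \<longrightarrow> r i \<noteq> r j}"

definition ang_mom :: "('n::finite \<Rightarrow> real) \<Rightarrow> ('n \<Rightarrow> real^3) \<Rightarrow> ('n \<Rightarrow> real^3) \<Rightarrow> real^3" where
  "ang_mom m r v = (\<Sum>i\<in>UNIV. m i *\<^sub>R cross3 (r i) (v i))"

definition kin_energy :: "('n::finite \<Rightarrow> real) \<Rightarrow> ('n \<Rightarrow> real^3) \<Rightarrow> real" where
  "kin_energy m v = (1/2) * (\<Sum>i\<in>UNIV. m i * (norm (v i))\<^sup>2)"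

definition moment_inertia :: "('n::finite \<Rightarrow> real) \<Rightarrow> ('n \<Rightarrow> real^3) \<Rightarrow> real" where
  "moment_inertia m r = (\<Sum>i\<in>UNIV. m i * (norm (r i))\<^sup>2)"

definition nbody_solution ::
  "real \<Rightarrow> ('n::finite \<Rightarrow> real) \<Rightarrow> real set \<Rightarrow> (real \<Rightarrow> 'n \<Rightarrow> real^3) \<Rightarrow> (real \<Rightarrow> 'n \<Rightarrow> real^3) \<Rightarrow> bool" where
  "nbody_solution \<gamma> m I x x' \<longleftrightarrow>
     open I \<and> is_interval I \<and>
     (\<forall>t\<in>I. x t \<in> config_space) \<and>
     (\<forall>t\<in>I. \<forall>i. ((\<lambda>s. x s i) has_vector_derivative x' t i) (at t)) \<and>
     (\<forall>t\<in>I. \<forall>i. ((\<lambda>s. x' s i) has_vector_derivative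
          ((1 / m i) *\<^sub>R (\<Sum>j\<in>UNIV - {i}.
              (\<gamma> * m i * m j / (norm (x t j - x t i))^3) *\<^sub>R (x t j - x t i)))) (at t))"

end

theory Submission
  imports Defs
begin

text \<open>
  Let n = L/|L| and write x^\<bottom> for the component of a vector x orthogonal to n. Since
  (r_i \<times> v_i) \<bullet> n \<le> |r_i^\<bottom>| |v_i^\<bottom>|, the weighted AM-GM inequality with weight 2T/|L| gives
  g(r) \<ge> |L|^2/(2T) + \<Sum> m_i (r_i \<bullet> n)^2 + (|L|/(2T))^2 \<Sum> m_i (v_i \<bullet> n)^2
  for every admissible state. The value |L|^2/(2T) is attained by distinct bodies on a line
  orthogonal to L rotating rigidly about L, so at a minimiser all normal components vanish.

  Along a solution, z_i = x_i \<bullet> n and w_i = \<dot>x_i \<bullet> n satisfy the linear system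
  \<dot>z_i = w_i, \<dot>w_i = \<Sum>_j c_ij(t) (z_j - z_i), whose coefficients are continuous because the
  bodies never collide. Hence E = \<Sum> z_i^2 + w_i^2 satisfies |\<dot>E| \<le> K E on every compact
  time interval, and by Gronwall's inequality E stays 0 if it vanishes at time 0.
\<close>

lemma mult_le_weighted_squares:
  fixes a b l :: real
  assumes "l > 0"
  shows "a * b \<le> (l * a\<^sup>2 + b\<^sup>2 / l) / 2"
proof -
  have "0 \<le> (l * a - b)\<^sup>2 / l" using assms by simp
  also have "\<dots> = l * a\<^sup>2 - 2 * a * b + b\<^sup>2 / l"
    using assms by (simp add: power2_eq_square field_simps)
  finally show ?thesis by simp
qed

lemma norm_reject_unit_sq:
  fixes x n :: "real^3"
  assumes "norm n = 1"
  shows "(norm (x - (x \<bullet> n) *\<^sub>R n))\<^sup>2 = (norm x)\<^sup>2 - (x \<bullet> n)\<^sup>2"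
proof -
  have "n \<bullet> n = 1" using assms by (simp add: norm_eq_1)
  then show ?thesis
    unfolding power2_norm_eq_inner
    by (simp add: inner_diff_left inner_diff_right inner_commute power2_eq_square)
qed

lemma inner_cross3_unit_le:
  fixes r v n :: "real^3"
  assumes "norm n = 1"
  shows "cross3 r v \<bullet> n \<le> norm (r - (r \<bullet> n) *\<^sub>R n) * norm (v - (v \<bullet> n) *\<^sub>R n)"
proof -
  define P where "P = r - (r \<bullet> n) *\<^sub>R n"
  define Q where "Q = v - (v \<bullet> n) *\<^sub>R n"
  have "cross3 r v \<bullet> n = cross3 (P + (r \<bullet> n) *\<^sub>R n) (Q + (v \<bullet> n) *\<^sub>R n) \<bullet> n"
    by (simp add: P_def Q_def)
  also have "\<dots> = cross3 P Q \<bullet> n"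
    by (simp add: cross_add_left cross_add_right cross_mult_left cross_mult_right
        inner_add_left dot_cross_self)
  also have "\<dots> \<le> norm (cross3 P Q)"
    using norm_cauchy_schwarz[of "cross3 P Q" n] assms by simp
  also have "\<dots> \<le> norm P * norm Q"
  proof (rule power2_le_imp_le)
    show "(norm (cross3 P Q))\<^sup>2 \<le> (norm P * norm Q)\<^sup>2"
      using norm_cross_dot[of P Q] zero_le_power2[of "P \<bullet> Q"] by linarith
  qed simp
  finally show ?thesis by (simp add: P_def Q_def)
qed

lemma inner_ang_mom_le:
  fixes m :: "'n::finite \<Rightarrow> real" and r v :: "'n \<Rightarrow> real^3" and n :: "real^3"
  assumes m_nonneg: "\<And>i. m i \<ge> 0" and n: "norm n = 1" and l: "l > 0"
  shows "ang_mom m r v \<bullet> n \<le>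
    (l * (moment_inertia m r - (\<Sum>i\<in>UNIV. m i * (r i \<bullet> n)\<^sup>2))
     + (2 * kin_energy m v - (\<Sum>i\<in>UNIV. m i * (v i \<bullet> n)\<^sup>2)) / l) / 2"
proof -
  have "ang_mom m r v \<bullet> n = (\<Sum>i\<in>UNIV. m i * (cross3 (r i) (v i) \<bullet> n))"
    by (simp add: ang_mom_def inner_sum_left)
  also have "\<dots> \<le> (\<Sum>i\<in>UNIV. m i *
      ((l * ((norm (r i))\<^sup>2 - (r i \<bullet> n)\<^sup>2) + ((norm (v i))\<^sup>2 - (v i \<bullet> n)\<^sup>2) / l) / 2))"
  proof (intro sum_mono mult_left_mono m_nonneg)
    fix i
    show "cross3 (r i) (v i) \<bullet> n
      \<le> (l * ((norm (r i))\<^sup>2 - (r i \<bullet> n)\<^sup>2) + ((norm (v i))\<^sup>2 - (v i \<bullet> n)\<^sup>2) / l) / 2"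
      using inner_cross3_unit_le[OF n, of "r i" "v i"]
        mult_le_weighted_squares[OF l, of "norm (r i - (r i \<bullet> n) *\<^sub>R n)" "norm (v i - (v i \<bullet> n) *\<^sub>R n)"]
      by (simp add: norm_reject_unit_sq[OF n])
  qed
  also have "\<dots> = (\<Sum>i\<in>UNIV. (l * (m i * (norm (r i))\<^sup>2) - l * (m i * (r i \<bullet> n)\<^sup>2)
      + m i * (norm (v i))\<^sup>2 / l - m i * (v i \<bullet> n)\<^sup>2 / l) / 2)"
    using l by (intro sum.cong refl) (simp add: field_simps)
  also have "\<dots> = (l * (moment_inertia m r - (\<Sum>i\<in>UNIV. m i * (r i \<bullet> n)\<^sup>2))
     + (2 * kin_energy m v - (\<Sum>i\<in>UNIV. m i * (v i \<bullet> n)\<^sup>2)) / l) / 2"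
    unfolding moment_inertia_def kin_energy_def
    by (simp only: sum_divide_distrib[symmetric] sum.distrib sum_subtractf sum_distrib_left)
       (simp add: sum_distrib_left right_diff_distrib diff_divide_distrib)
  finally show ?thesis .
qed

lemma moment_inertia_lower_bound:
  fixes m :: "'n::finite \<Rightarrow> real" and r v :: "'n \<Rightarrow> real^3"
  assumes m_nonneg: "\<And>i. m i \<ge> 0"
    and L_eq: "ang_mom m r v = L" and T_eq: "kin_energy m v = T"
    and L_nz: "L \<noteq> 0" and T_pos: "T > 0"
  shows "(norm L)\<^sup>2 / (2 * T) + (\<Sum>i\<in>UNIV. m i * (r i \<bullet> sgn L)\<^sup>2)
           + (norm L / (2 * T))\<^sup>2 * (\<Sum>i\<in>UNIV. m i * (v i \<bullet> sgn L)\<^sup>2)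
         \<le> moment_inertia m r"
proof -
  define A where "A = (\<Sum>i\<in>UNIV. m i * (r i \<bullet> sgn L)\<^sup>2)"
  define B where "B = (\<Sum>i\<in>UNIV. m i * (v i \<bullet> sgn L)\<^sup>2)"
  have L_pos: "norm L > 0" using L_nz by simp
  have n: "norm (sgn L) = 1" using L_nz by (simp add: norm_sgn)
  have "L \<bullet> sgn L = norm L"
    using L_pos by (simp add: sgn_div_norm dot_square_norm power2_eq_square)
  then have "norm L \<le> (2 * T / norm L * (moment_inertia m r - A) + (2 * T - B) / (2 * T / norm L)) / 2"
    using inner_ang_mom_le[of m "sgn L" "2 * T / norm L" r v] m_nonneg n L_pos T_pos L_eq T_eq
    by (simp add: A_def B_def)
  then show ?thesis
    unfolding A_def[symmetric] B_def[symmetric]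
    using L_pos T_pos by (simp add: field_simps power2_eq_square)
qed

lemma exists_orthonormal_cross3_eq:
  fixes n :: "real^3"
  assumes "norm n = 1"
  obtains u w where "norm u = 1" "norm w = 1" "cross3 u w = n"
proof -
  have "n \<noteq> 0" using assms by auto
  then obtain e where e: "cross3 n e \<noteq> 0" using cross_basis_nonzero by blast
  define u where "u = sgn (cross3 n e)"
  define w where "w = cross3 n u"
  have nu: "norm u = 1" using e by (simp add: u_def norm_sgn)
  have un: "u \<bullet> n = 0" unfolding u_def sgn_div_norm by (simp add: dot_cross_self inner_commute)
  have "(norm w)\<^sup>2 = 1"
    using norm_cross_dot[of n u] assms nu un by (simp add: w_def inner_commute)
  then have "norm w = 1" using norm_ge_zero[of w] by (auto simp: power2_eq_1_iff)
  moreover have "cross3 u w = n"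
    using nu un by (simp add: w_def Lagrange norm_eq_1 inner_commute)
  ultimately show ?thesis using that nu by blast
qed

lemma exists_state_moment_inertia_eq:
  fixes m :: "'n::finite \<Rightarrow> real" and L :: "real^3" and T :: real
  assumes m_pos: "\<And>i. m i > 0" and L_nz: "L \<noteq> 0" and T_pos: "T > 0"
  obtains r v where "r \<in> config_space" "ang_mom m r v = L" "kin_energy m v = T"
    "moment_inertia m r = (norm L)\<^sup>2 / (2 * T)"
proof -
  have "norm (sgn L) = 1" using L_nz by (simp add: norm_sgn)
  then obtain u w where nu: "norm u = 1" and nw: "norm w = 1" and uw: "cross3 u w = sgn L"
    by (rule exists_orthonormal_cross3_eq)
  obtain f :: "'n \<Rightarrow> nat" where f: "inj f"
    using finite_imp_inj_to_nat_seg[of "UNIV :: 'n set"] by auto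
  define d where "d i = real (f i) + 1" for i
  define S where "S = (\<Sum>i\<in>UNIV. m i * (d i)\<^sup>2)"
  have S_pos: "S > 0" unfolding S_def by (rule sum_pos) (auto simp: d_def m_pos)
  define c where "c = 2 * T / norm L"
  define k where "k = sqrt ((norm L)\<^sup>2 / (2 * T * S))"
  have k_pos: "k > 0" using L_nz T_pos S_pos by (simp add: k_def)
  have k2: "k\<^sup>2 * S = (norm L)\<^sup>2 / (2 * T)" using L_nz T_pos S_pos by (simp add: k_def)
  define r where "r i = (k * d i) *\<^sub>R u" for i
  define v where "v i = (c * k * d i) *\<^sub>R w" for i
  have "r \<in> config_space"
    unfolding config_space_def
  proof (intro CollectI allI impI)
    fix i j :: 'n assume "i \<noteq> j"
    then have "k * d i \<noteq> k * d j" using f k_pos by (auto simp: d_def inj_eq)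
    then show "r i \<noteq> r j" using nu by (auto simp: r_def)
  qed
  moreover have "ang_mom m r v = (c * k\<^sup>2 * S) *\<^sub>R sgn L"
    unfolding ang_mom_def r_def v_def S_def
    by (simp add: cross_mult_left cross_mult_right uw scaleR_sum_left sum_distrib_left
        power2_eq_square mult_ac)
  moreover have "kin_energy m v = c\<^sup>2 * k\<^sup>2 * S / 2"
    unfolding kin_energy_def v_def S_def
    by (simp add: nw sum_distrib_left power_mult_distrib mult_ac)
  moreover have "moment_inertia m r = k\<^sup>2 * S"
    unfolding moment_inertia_def r_def S_def
    by (simp add: nu sum_distrib_left power_mult_distrib mult_ac)
  moreover have "c * k\<^sup>2 * S = norm L" "c\<^sup>2 * k\<^sup>2 * S / 2 = T"
    using k2 L_nz T_pos by (simp_all add: c_def field_simps power2_eq_square)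
  ultimately show ?thesis
    using that k2 L_nz by (simp add: sgn_div_norm)
qed

lemma moment_inertia_minimizer_orthogonal:
  fixes m :: "'n::finite \<Rightarrow> real" and r v :: "'n \<Rightarrow> real^3"
  assumes m_pos: "\<And>i. m i > 0" and L_nz: "L \<noteq> 0" and T_pos: "T > 0"
    and L_eq: "ang_mom m r v = L" and T_eq: "kin_energy m v = T"
    and minim: "\<And>r' v'. r' \<in> config_space \<Longrightarrow> ang_mom m r' v' = L \<Longrightarrow>
                  kin_energy m v' = T \<Longrightarrow> moment_inertia m r \<le> moment_inertia m r'"
  shows "r i \<bullet> L = 0 \<and> v i \<bullet> L = 0"
proof -
  define A where "A = (\<Sum>i\<in>UNIV. m i * (r i \<bullet> sgn L)\<^sup>2)"
  define B where "B = (\<Sum>i\<in>UNIV. m i * (v i \<bullet> sgn L)\<^sup>2)"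
  have m_nonneg: "\<And>i. m i \<ge> 0" using m_pos less_imp_le by blast
  obtain r' v' where "r' \<in> config_space" "ang_mom m r' v' = L" "kin_energy m v' = T"
    and "moment_inertia m r' = (norm L)\<^sup>2 / (2 * T)"
    using exists_state_moment_inertia_eq[OF m_pos L_nz T_pos] .
  then have "moment_inertia m r \<le> (norm L)\<^sup>2 / (2 * T)" using minim by metis
  moreover have "(norm L)\<^sup>2 / (2 * T) + A + (norm L / (2 * T))\<^sup>2 * B \<le> moment_inertia m r"
    unfolding A_def B_def by (rule moment_inertia_lower_bound[OF m_nonneg L_eq T_eq L_nz T_pos])
  moreover have "A \<ge> 0" "B \<ge> 0" unfolding A_def B_def by (simp_all add: sum_nonneg m_nonneg)
  moreover have "(norm L / (2 * T))\<^sup>2 * B \<ge> 0" using \<open>B \<ge> 0\<close> by simp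
  ultimately have "A = 0" "(norm L / (2 * T))\<^sup>2 * B = 0" by linarith+
  then have "A = 0" "B = 0" using L_nz T_pos by simp_all
  then have "m i * (r i \<bullet> sgn L)\<^sup>2 = 0" "m i * (v i \<bullet> sgn L)\<^sup>2 = 0"
    unfolding A_def B_def by (simp_all add: sum_nonneg_eq_0_iff m_nonneg)
  then have "r i \<bullet> sgn L = 0" "v i \<bullet> sgn L = 0" using m_pos[of i] by simp_all
  then show ?thesis using L_nz by (simp add: sgn_div_norm)
qed

lemma inner_const_has_real_derivative:
  fixes f :: "real \<Rightarrow> 'a::real_inner"
  assumes "(f has_vector_derivative f') (at t)"
  shows "((\<lambda>s. f s \<bullet> n) has_real_derivative f' \<bullet> n) (at t)"
  unfolding has_real_derivative_iff_has_vector_derivative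
  using bounded_linear.has_vector_derivative[OF bounded_linear_inner_left assms] .

lemma gronwall_endpoint_zero_iff:
  fixes E E' :: "real \<Rightarrow> real" and a b K :: real
  assumes ab: "a \<le> b"
    and deriv: "\<And>s. s \<in> {a..b} \<Longrightarrow> (E has_real_derivative E' s) (at s)"
    and bound: "\<And>s. s \<in> {a..b} \<Longrightarrow> \<bar>E' s\<bar> \<le> K * E s"
    and nonneg: "\<And>s. s \<in> {a..b} \<Longrightarrow> E s \<ge> 0"
  shows "E a = 0 \<longleftrightarrow> E b = 0"
proof
  assume Ea: "E a = 0"
  have "E b * exp (- K * b) \<le> E a * exp (- K * a)"
  proof (rule DERIV_nonpos_imp_nonincreasing[OF ab, where f = "\<lambda>s. E s * exp (- K * s)"])
    fix s assume "a \<le> s" "s \<le> b"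
    then have s: "s \<in> {a..b}" by simp
    have "((\<lambda>s. E s * exp (- K * s)) has_real_derivative (E' s - K * E s) * exp (- K * s)) (at s)"
      by (auto intro!: derivative_eq_intros deriv[OF s] simp: algebra_simps)
    moreover have "(E' s - K * E s) * exp (- K * s) \<le> 0"
      using bound[OF s] by (simp add: mult_nonpos_nonneg)
    ultimately show "\<exists>y. ((\<lambda>s. E s * exp (- K * s)) has_real_derivative y) (at s) \<and> y \<le> 0"
      by blast
  qed
  then have "E b \<le> 0" using Ea by (simp add: mult_le_0_iff)
  then show "E b = 0" using nonneg[of b] ab by simp
next
  assume Eb: "E b = 0"
  have "E a * exp (K * a) \<le> E b * exp (K * b)"
  proof (rule DERIV_nonneg_imp_nondecreasing[OF ab, where f = "\<lambda>s. E s * exp (K * s)"])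
    fix s assume "a \<le> s" "s \<le> b"
    then have s: "s \<in> {a..b}" by simp
    have "((\<lambda>s. E s * exp (K * s)) has_real_derivative (E' s + K * E s) * exp (K * s)) (at s)"
      by (auto intro!: derivative_eq_intros deriv[OF s] simp: algebra_simps)
    moreover have "(E' s + K * E s) * exp (K * s) \<ge> 0"
      using bound[OF s] by simp
    ultimately show "\<exists>y. ((\<lambda>s. E s * exp (K * s)) has_real_derivative y) (at s) \<and> y \<ge> 0"
      by blast
  qed
  then have "E a \<le> 0" using Eb by (simp add: mult_le_0_iff)
  then show "E a = 0" using nonneg[of a] ab by simp
qed

lemma abs_two_mult_diff_le:
  fixes w p q E :: real
  assumes "w\<^sup>2 \<le> E" "p\<^sup>2 \<le> E" "q\<^sup>2 \<le> E"
  shows "\<bar>2 * w * (p - q)\<bar> \<le> 4 * E"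
proof -
  have two_mult: "2 * \<bar>x\<bar> * \<bar>y\<bar> \<le> x\<^sup>2 + y\<^sup>2" for x y :: real
    using sum_squares_bound[of "\<bar>x\<bar>" "\<bar>y\<bar>"] by simp
  have "\<bar>2 * w * (p - q)\<bar> \<le> 2 * \<bar>w\<bar> * \<bar>p\<bar> + 2 * \<bar>w\<bar> * \<bar>q\<bar>"
    using mult_left_mono[OF abs_triangle_ineq4[of p q], of "2 * \<bar>w\<bar>"]
    by (simp add: abs_mult distrib_left)
  also have "\<dots> \<le> 4 * E" using two_mult[of w p] two_mult[of w q] assms by linarith
  finally show ?thesis .
qed

lemma linear_system_energy_deriv_bound:
  fixes z w :: "'n::finite \<Rightarrow> real" and c :: "'n \<Rightarrow> 'n \<Rightarrow> real"
  defines "E \<equiv> \<Sum>i\<in>UNIV. (z i)\<^sup>2 + (w i)\<^sup>2"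
  shows "\<bar>\<Sum>i\<in>UNIV. 2 * z i * w i + 2 * w i * (\<Sum>j\<in>UNIV - {i}. c i j * (z j - z i))\<bar>
         \<le> (1 + 4 * (\<Sum>i\<in>UNIV. \<Sum>j\<in>UNIV - {i}. \<bar>c i j\<bar>)) * E"
proof -
  have zw_E: "(z i)\<^sup>2 + (w i)\<^sup>2 \<le> E" for i
    unfolding E_def by (rule member_le_sum) auto
  have z_E: "(z i)\<^sup>2 \<le> E" and w_E: "(w i)\<^sup>2 \<le> E" for i
    using zw_E[of i] zero_le_power2[of "z i"] zero_le_power2[of "w i"] by linarith+
  have zw: "\<bar>2 * z i * w i\<bar> \<le> (z i)\<^sup>2 + (w i)\<^sup>2" for i
    using sum_squares_bound[of "\<bar>z i\<bar>" "\<bar>w i\<bar>"] by (simp add: abs_mult)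
  have wc: "\<bar>2 * w i * (\<Sum>j\<in>UNIV - {i}. c i j * (z j - z i))\<bar>
      \<le> 4 * E * (\<Sum>j\<in>UNIV - {i}. \<bar>c i j\<bar>)" for i
  proof -
    have "\<bar>2 * w i * (\<Sum>j\<in>UNIV - {i}. c i j * (z j - z i))\<bar>
        = \<bar>\<Sum>j\<in>UNIV - {i}. c i j * (2 * w i * (z j - z i))\<bar>"
      by (simp add: sum_distrib_left mult_ac)
    also have "\<dots> \<le> (\<Sum>j\<in>UNIV - {i}. \<bar>c i j\<bar> * \<bar>2 * w i * (z j - z i)\<bar>)"
      by (rule order.trans[OF sum_abs]) (simp add: abs_mult)
    also have "\<dots> \<le> (\<Sum>j\<in>UNIV - {i}. \<bar>c i j\<bar> * (4 * E))"
      by (intro sum_mono mult_left_mono abs_two_mult_diff_le w_E z_E) simp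
    finally show ?thesis by (simp add: sum_distrib_left sum_distrib_right mult_ac)
  qed
  have "\<bar>\<Sum>i\<in>UNIV. 2 * z i * w i + 2 * w i * (\<Sum>j\<in>UNIV - {i}. c i j * (z j - z i))\<bar>
      \<le> (\<Sum>i\<in>UNIV. ((z i)\<^sup>2 + (w i)\<^sup>2) + 4 * E * (\<Sum>j\<in>UNIV - {i}. \<bar>c i j\<bar>))"
    by (intro order.trans[OF sum_abs] sum_mono order.trans[OF abs_triangle_ineq] add_mono zw wc)
  also have "\<dots> = (1 + 4 * (\<Sum>i\<in>UNIV. \<Sum>j\<in>UNIV - {i}. \<bar>c i j\<bar>)) * E"
    by (simp only: sum.distrib flip: sum_distrib_left) (simp add: E_def sum.distrib algebra_simps)
  finally show ?thesis .
qed

lemma linear_system_endpoint_zero_iff: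
  fixes z w :: "'n::finite \<Rightarrow> real \<Rightarrow> real" and c :: "'n \<Rightarrow> 'n \<Rightarrow> real \<Rightarrow> real"
  assumes ab: "a \<le> b"
    and dz: "\<And>i s. s \<in> {a..b} \<Longrightarrow> (z i has_real_derivative w i s) (at s)"
    and dw: "\<And>i s. s \<in> {a..b} \<Longrightarrow>
               (w i has_real_derivative (\<Sum>j\<in>UNIV - {i}. c i j s * (z j s - z i s))) (at s)"
    and cont: "\<And>i j. j \<noteq> i \<Longrightarrow> continuous_on {a..b} (c i j)"
  shows "(\<forall>i. z i a = 0 \<and> w i a = 0) \<longleftrightarrow> (\<forall>i. z i b = 0 \<and> w i b = 0)"
proof -
  define E where "E s = (\<Sum>i\<in>UNIV. (z i s)\<^sup>2 + (w i s)\<^sup>2)" for s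
  define E' where "E' s = (\<Sum>i\<in>UNIV. 2 * z i s * w i s
                      + 2 * w i s * (\<Sum>j\<in>UNIV - {i}. c i j s * (z j s - z i s)))" for s
  define C where "C s = (\<Sum>i\<in>UNIV. \<Sum>j\<in>UNIV - {i}. \<bar>c i j s\<bar>)" for s
  have E_zero_iff: "E s = 0 \<longleftrightarrow> (\<forall>i. z i s = 0 \<and> w i s = 0)" for s
    unfolding E_def by (simp add: sum_nonneg_eq_0_iff add_nonneg_eq_0_iff)
  have "continuous_on {a..b} C"
    unfolding C_def by (intro continuous_on_sum continuous_on_rabs cont) auto
  then obtain K where K: "\<And>s. s \<in> {a..b} \<Longrightarrow> C s \<le> K"
    using compact_continuous_image[OF _ compact_Icc] compact_imp_bounded bounded_iff
    by (metis abs_le_D1 image_eqI real_norm_def)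
  have "E a = 0 \<longleftrightarrow> E b = 0"
  proof (rule gronwall_endpoint_zero_iff[OF ab])
    fix s assume s: "s \<in> {a..b}"
    show "(E has_real_derivative E' s) (at s)"
      unfolding E_def E'_def
      by (auto intro!: derivative_eq_intros dz[OF s] dw[OF s] simp: mult_ac)
    have "\<bar>E' s\<bar> \<le> (1 + 4 * C s) * E s"
      unfolding E'_def C_def E_def by (rule linear_system_energy_deriv_bound)
    also have "\<dots> \<le> (1 + 4 * K) * E s"
      using K[OF s] by (intro mult_right_mono) (simp_all add: E_def sum_nonneg)
    finally show "\<bar>E' s\<bar> \<le> (1 + 4 * K) * E s" .
    show "E s \<ge> 0" by (simp add: E_def sum_nonneg)
  qed
  then show ?thesis by (simp add: E_zero_iff)
qed

lemma nbody_solution_orthogonal_invariant: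
  fixes m :: "'n::finite \<Rightarrow> real" and n :: "real^3"
  assumes sol: "nbody_solution \<gamma> m I x x'" and I0: "0 \<in> I" and tI: "t \<in> I"
    and init: "\<forall>i. x 0 i \<bullet> n = 0 \<and> x' 0 i \<bullet> n = 0"
  shows "\<forall>i. x t i \<bullet> n = 0 \<and> x' t i \<bullet> n = 0"
proof -
  have conf: "\<And>s. s \<in> I \<Longrightarrow> x s \<in> config_space"
    and dx: "\<And>s i. s \<in> I \<Longrightarrow> ((\<lambda>s. x s i) has_vector_derivative x' s i) (at s)"
    and dv: "\<And>s i. s \<in> I \<Longrightarrow> ((\<lambda>s. x' s i) has_vector_derivative
          ((1 / m i) *\<^sub>R (\<Sum>j\<in>UNIV - {i}.
              (\<gamma> * m i * m j / (norm (x s j - x s i))^3) *\<^sub>R (x s j - x s i)))) (at s)"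
    using sol unfolding nbody_solution_def by auto
  define a where "a = min 0 t"
  define b where "b = max 0 t"
  have sub: "{a..b} \<subseteq> I"
    using sol I0 tI unfolding nbody_solution_def a_def b_def
    by (auto simp: min_def max_def intro: mem_is_interval_1_I)
  \<comment> \<open>not simplified to \<gamma> * m j: nbody_solution does not require m i \<noteq> 0\<close>
  define c where "c i j s = (1 / m i) * (\<gamma> * m i * m j / (norm (x s j - x s i))^3)" for i j s
  have cont_x: "continuous_on {a..b} (\<lambda>s. x s j)" for j
    by (rule continuous_on_vector_derivative)
       (use sub dx in \<open>blast intro: has_vector_derivative_at_within\<close>)
  have "(\<forall>i. x a i \<bullet> n = 0 \<and> x' a i \<bullet> n = 0) \<longleftrightarrow> (\<forall>i. x b i \<bullet> n = 0 \<and> x' b i \<bullet> n = 0)"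
  proof (rule linear_system_endpoint_zero_iff[where z = "\<lambda>i s. x s i \<bullet> n" and c = c])
    show "a \<le> b" by (simp add: a_def b_def)
    fix i s assume s: "s \<in> {a..b}"
    then show "((\<lambda>s. x s i \<bullet> n) has_real_derivative x' s i \<bullet> n) (at s)"
      using sub by (intro inner_const_has_real_derivative dx) auto
    have "((1 / m i) *\<^sub>R (\<Sum>j\<in>UNIV - {i}.
              (\<gamma> * m i * m j / (norm (x s j - x s i))^3) *\<^sub>R (x s j - x s i))) \<bullet> n
          = (\<Sum>j\<in>UNIV - {i}. c i j s * (x s j \<bullet> n - x s i \<bullet> n))"
      unfolding c_def
      by (simp only: inner_scaleR_left inner_sum_left inner_diff_left sum_distrib_left mult.assoc)
    then show "((\<lambda>s. x' s i \<bullet> n) has_real_derivative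
        (\<Sum>j\<in>UNIV - {i}. c i j s * (x s j \<bullet> n - x s i \<bullet> n))) (at s)"
      using inner_const_has_real_derivative[OF dv, of s i n] s sub by auto
  next
    fix i j :: 'n assume "j \<noteq> i"
    then have "norm (x s j - x s i) ^ 3 \<noteq> 0" if "s \<in> {a..b}" for s
      using conf[of s] sub that unfolding config_space_def by auto
    then show "continuous_on {a..b} (c i j)"
      unfolding c_def by (intro continuous_intros cont_x) auto
  qed
  moreover have "(a = 0 \<and> b = t) \<or> (a = t \<and> b = 0)" by (auto simp: a_def b_def)
  ultimately show ?thesis using init by auto
qed

theorem theorem10p1:
  fixes m :: "'n::finite \<Rightarrow> real" and \<gamma> T :: real and L :: "real^3"
    and r v :: "'n \<Rightarrow> real^3"
  assumes N: "CARD('n) \<ge> 2"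
    and m_pos: "\<And>i. m i > 0"
    and gamma_pos: "\<gamma> > 0"
    and L_nz: "L \<noteq> 0"
    and T_pos: "T > 0"
    and r_conf: "r \<in> config_space"
    and L_eq: "ang_mom m r v = L"
    and T_eq: "kin_energy m v = T"
    and minim: "\<And>r' v'. r' \<in> config_space \<Longrightarrow> ang_mom m r' v' = L \<Longrightarrow>
                  kin_energy m v' = T \<Longrightarrow> moment_inertia m r \<le> moment_inertia m r'"
  shows "(\<forall>i. r i \<bullet> L = 0 \<and> v i \<bullet> L = 0) \<and>
         (\<forall>I x x'. nbody_solution \<gamma> m I x x' \<and> 0 \<in> I \<and> x 0 = r \<and> x' 0 = v \<longrightarrow>
            (\<forall>t\<in>I. \<forall>i. x t i \<bullet> L = 0 \<and> x' t i \<bullet> L = 0))"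
proof -
  have "\<forall>i. r i \<bullet> L = 0 \<and> v i \<bullet> L = 0"
    using moment_inertia_minimizer_orthogonal[of m L T r v] m_pos L_nz T_pos L_eq T_eq minim
    by blast
  then show ?thesis
    using nbody_solution_orthogonal_invariant[where n = L] by blast
qed

end
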